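(* Let $\mathcal{F}=\{S_1,\dots,S_m\}$ be a set system on a ground set $X$. Then there exist sets $C_1,\dots,C_m\in\mathcal{B}^2_2$ such that for every $I\subset[m]$ we have $\bigcap_{i\in I}S_i\neq\emptyset$ if and only if $\bigcap_{i\in I}C_i\neq\emptyset$.
   Context: For positive integers $k,d$, $\mathcal{B}^d_k$ denotes the collection of subsets of $\mathbb{R}^d$ that are solution sets of systems of polynomial inequalities (each strict or non-strict) in $d$ real variables with real polynomials of degree at most $k$. $[m]=\{1,\dots,m\}$. *)

theory Defs
  imports "HOL-Analysis.Analysis"
begin

definition poly_eval :: "nat \<Rightarrow> (('n::finite \<Rightarrow> nat) \<Rightarrow> real) \<Rightarrow> real ^ 'n \<Rightarrow> real" where
  "poly_eval k c x = (\<Sum>\<alpha> \<in> {\<alpha>::'n \<Rightarrow> nat. sum \<alpha> UNIV \<le> k}. c \<alpha> * (\<Prod>i\<in>UNIV. (x $ i) ^ (\<alpha> i)))"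

text \<open>B k (at type real^'n, i.e. d = CARD('n)): solution sets of finite systems of
  polynomial inequalities p > 0 (strict, flag True) or p \<ge> 0 (non-strict, flag False)
  with polynomials of degree at most k.\<close>
definition semialg_B :: "nat \<Rightarrow> (real ^ 'n::finite) set set" where
  "semialg_B k = {S. \<exists>ps :: ((('n \<Rightarrow> nat) \<Rightarrow> real) \<times> bool) list.
      S = {x. \<forall>(c, strict) \<in> set ps.
              (if strict then poly_eval k c x > 0 else poly_eval k c x \<ge> 0)}}"

end

theory Submission
  imports Defs
begin

text \<open>Only the nerve of the family matters, i.e.\ the index sets J with nonempty intersection.
  Give every face J of the nerve a distinct real label and let C i consist of the points of the
  plane whose first coordinate is the label of a face containing i. The C i with i \<in> I then meet
  iff some face contains I, i.e.\ iff I is itself a face. Each C i is a finite union of vertical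
  lines, and a finite set F of reals is cut out by inequalities of degree 2:
  min F \<le> y \<le> max F and (y - a) (y - b) \<ge> 0 for all consecutive a < b in F.\<close>

lemma finite_exponents_bounded_degree:
  "finite {\<alpha>::'n::finite \<Rightarrow> nat. sum \<alpha> UNIV \<le> k}"
proof (rule finite_subset)
  show "{\<alpha>::'n \<Rightarrow> nat. sum \<alpha> UNIV \<le> k} \<subseteq> PiE UNIV (\<lambda>_. {..k})"
  proof
    fix \<alpha> :: "'n \<Rightarrow> nat"
    assume "\<alpha> \<in> {\<alpha>. sum \<alpha> UNIV \<le> k}"
    then have "\<alpha> j \<le> k" for j
      using member_le_sum[of j UNIV \<alpha>] by simp
    then show "\<alpha> \<in> PiE UNIV (\<lambda>_. {..k})"
      by auto
  qed
qed (simp add: finite_PiE)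

lemma ex_poly_eval_univariate:
  fixes a :: "nat \<Rightarrow> real" and i :: "'n::finite"
  shows "\<exists>c. \<forall>x. poly_eval k c x = (\<Sum>n\<le>k. a n * x $ i ^ n)"
proof -
  define e :: "nat \<Rightarrow> 'n \<Rightarrow> nat" where "e n = (\<lambda>j. if j = i then n else 0)" for n
  define D where "D = {\<alpha>::'n \<Rightarrow> nat. sum \<alpha> UNIV \<le> k}"
  define c where "c \<alpha> = (\<Sum>n\<le>k. if \<alpha> = e n then a n else 0)" for \<alpha>
  have finite_D: "finite D"
    unfolding D_def by (rule finite_exponents_bounded_degree)
  have e_in_D: "e n \<in> D" if "n \<le> k" for n
    using that by (simp add: D_def e_def if_distrib)
  have monomial: "(\<Prod>j\<in>UNIV. x $ j ^ e n j) = x $ i ^ n" for x :: "real ^ 'n" and n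
    unfolding e_def by (simp add: if_distrib[of "\<lambda>m. _ ^ m"] cong: if_cong)
  have "poly_eval k c x = (\<Sum>n\<le>k. a n * x $ i ^ n)" for x
  proof -
    have "poly_eval k c x = (\<Sum>n\<le>k. \<Sum>\<alpha>\<in>D. (if \<alpha> = e n then a n else 0) * (\<Prod>j\<in>UNIV. x $ j ^ \<alpha> j))"
      unfolding poly_eval_def c_def D_def sum_distrib_right by (rule sum.swap)
    also have "\<dots> = (\<Sum>n\<le>k. a n * x $ i ^ n)"
      using e_in_D by (intro sum.cong) (simp_all add: finite_D monomial if_distrib[of "\<lambda>a. a * _"] cong: if_cong)
    finally show ?thesis .
  qed
  then show ?thesis by blast
qed

lemma semialg_B_UNIV: "UNIV \<in> semialg_B k"
  unfolding semialg_B_def by (rule CollectI, rule exI[of _ "[]"]) simp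

lemma semialg_B_Int:
  assumes "A \<in> semialg_B k" and "B \<in> semialg_B k"
  shows "A \<inter> B \<in> semialg_B k"
proof -
  obtain ps qs where "A = {x. \<forall>(c, strict) \<in> set ps. (if strict then poly_eval k c x > 0 else poly_eval k c x \<ge> 0)}"
    and "B = {x. \<forall>(c, strict) \<in> set qs. (if strict then poly_eval k c x > 0 else poly_eval k c x \<ge> 0)}"
    using assms unfolding semialg_B_def by blast
  then show ?thesis
    unfolding semialg_B_def by (intro CollectI exI[of _ "ps @ qs"]) auto
qed

lemma semialg_B_Inter:
  assumes "finite \<A>" and "\<A> \<subseteq> semialg_B k"
  shows "\<Inter>\<A> \<in> semialg_B k"
  using assms by (induction rule: finite_induct) (auto intro: semialg_B_UNIV semialg_B_Int)

lemma semialg_B_poly_eval_nonneg: "{x. poly_eval k c x \<ge> 0} \<in> semialg_B k"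
  unfolding semialg_B_def by (intro CollectI exI[of _ "[(c, False)]"]) simp

lemma semialg_B_coordinate_quadratic_nonneg:
  fixes i :: "'n::finite"
  shows "{x::real ^ 'n. a0 + a1 * x $ i + a2 * (x $ i)\<^sup>2 \<ge> 0} \<in> semialg_B 2"
proof -
  obtain c where "\<And>x::real ^ 'n. poly_eval 2 c x = (\<Sum>n\<le>2. [a0, a1, a2] ! n * x $ i ^ n)"
    using ex_poly_eval_univariate by blast
  then have "\<And>x::real ^ 'n. poly_eval 2 c x = a0 + a1 * x $ i + a2 * (x $ i)\<^sup>2"
    by (simp add: numeral_2_eq_2 atMost_Suc)
  then show ?thesis
    using semialg_B_poly_eval_nonneg[of 2 c] by simp
qed

definition gaps :: "'a::linorder set \<Rightarrow> ('a \<times> 'a) set" where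
  "gaps F = {(a, b). a \<in> F \<and> b \<in> F \<and> a < b \<and> {a<..<b} \<inter> F = {}}"

lemma finite_gaps: "finite F \<Longrightarrow> finite (gaps F)"
  unfolding gaps_def by (rule finite_subset[of _ "F \<times> F"]) auto

lemma mem_finite_iff_not_in_gap:
  fixes F :: "'a::linordered_idom set"
  assumes "finite F" and "F \<noteq> {}"
  shows "y \<in> F \<longleftrightarrow> Min F \<le> y \<and> y \<le> Max F \<and>
    (\<forall>(a, b)\<in>gaps F. (y - a) * (y - b) \<ge> 0)"
proof
  assume "y \<in> F"
  have "(y - a) * (y - b) \<ge> 0" if "(a, b) \<in> gaps F" for a b
  proof -
    have "y \<notin> {a<..<b}"
      using \<open>y \<in> F\<close> that by (auto simp: gaps_def)
    then have "y \<le> a \<or> b \<le> y"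
      by auto
    then show ?thesis
      using that by (auto simp: gaps_def intro: mult_nonneg_nonneg mult_nonpos_nonpos)
  qed
  moreover have "Min F \<le> y" "y \<le> Max F"
    using assms(1) \<open>y \<in> F\<close> by simp_all
  ultimately show "Min F \<le> y \<and> y \<le> Max F \<and>
      (\<forall>(a, b)\<in>gaps F. (y - a) * (y - b) \<ge> 0)"
    by blast
next
  assume bounds: "Min F \<le> y \<and> y \<le> Max F \<and>
    (\<forall>(a, b)\<in>gaps F. (y - a) * (y - b) \<ge> 0)"
  show "y \<in> F"
  proof (rule ccontr)
    assume "y \<notin> F"
    define below where "below = {f \<in> F. f < y}"
    define above where "above = {f \<in> F. y < f}"
    have finite_below_above: "finite below" "finite above"
      unfolding below_def above_def using assms(1) by simp_all
    have "Min F \<in> F" "Max F \<in> F"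
      using assms by simp_all
    then have "Min F \<in> below" "Max F \<in> above"
      unfolding below_def above_def using bounds \<open>y \<notin> F\<close> by (auto simp: order_le_less)
    then have "below \<noteq> {}" "above \<noteq> {}"
      by blast+
    define a where "a = Max below"
    define b where "b = Min above"
    have "a \<in> below" "b \<in> above"
      unfolding a_def b_def using finite_below_above \<open>below \<noteq> {}\<close> \<open>above \<noteq> {}\<close> by simp_all
    then have "a \<in> F" "a < y" "b \<in> F" "y < b"
      unfolding below_def above_def by simp_all
    have "f \<notin> {a<..<b}" if "f \<in> F" for f
    proof (cases "f < y")
      case True
      then have "f \<le> a"
        unfolding a_def using finite_below_above(1) \<open>f \<in> F\<close> by (simp add: below_def)
      then show ?thesis
        by simp
    next
      case False
      then have "y < f"
        using \<open>y \<notin> F\<close> \<open>f \<in> F\<close> by (cases "f = y") auto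
      then have "b \<le> f"
        unfolding b_def using finite_below_above(2) \<open>f \<in> F\<close> by (simp add: above_def)
      then show ?thesis
        by simp
    qed
    then have "{a<..<b} \<inter> F = {}"
      by blast
    moreover have "(y - a) * (y - b) < 0"
      using \<open>a < y\<close> \<open>y < b\<close> by (simp add: mult_pos_neg)
    ultimately show False
      using bounds \<open>a \<in> F\<close> \<open>b \<in> F\<close> \<open>a < y\<close> \<open>y < b\<close> by (force simp: gaps_def)
  qed
qed

lemma semialg_B_coordinate_in_finite:
  fixes F :: "real set" and i :: "'n::finite"
  assumes "finite F"
  shows "{x::real ^ 'n. x $ i \<in> F} \<in> semialg_B 2"
proof -
  define Q where "Q a0 a1 a2 = {x::real ^ 'n. a0 + a1 * x $ i + a2 * (x $ i)\<^sup>2 \<ge> 0}" for a0 a1 a2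
  have Q_B: "Q a0 a1 a2 \<in> semialg_B 2" for a0 a1 a2
    unfolding Q_def by (rule semialg_B_coordinate_quadratic_nonneg)
  show ?thesis
  proof (cases "F = {}")
    case True
    then have "{x::real ^ 'n. x $ i \<in> F} = Q (-1) 0 0"
      by (simp add: Q_def)
    then show ?thesis
      using Q_B by simp
  next
    case False
    have Q_iffs: "x \<in> Q (- Min F) 1 0 \<longleftrightarrow> Min F \<le> x $ i"
      "x \<in> Q (Max F) (-1) 0 \<longleftrightarrow> x $ i \<le> Max F"
      "x \<in> Q (a * b) (- a - b) 1 \<longleftrightarrow> (x $ i - a) * (x $ i - b) \<ge> 0" for x a b
      unfolding Q_def by (simp_all add: power2_eq_square algebra_simps)
    have "{x::real ^ 'n. x $ i \<in> F} =
        Q (- Min F) 1 0 \<inter> Q (Max F) (-1) 0 \<inter> (\<Inter>(a, b)\<in>gaps F. Q (a * b) (- a - b) 1)"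
      using mem_finite_iff_not_in_gap[OF assms False] by (auto simp: Q_iffs)
    moreover have "finite (gaps F)"
      using assms by (rule finite_gaps)
    ultimately show ?thesis
      by (simp add: Q_B semialg_B_Int semialg_B_Inter image_subset_iff split_beta)
  qed
qed

definition nerve :: "'i set \<Rightarrow> ('i \<Rightarrow> 'a set) \<Rightarrow> 'i set set" where
  "nerve M S = {J. J \<subseteq> M \<and> (\<Inter>i\<in>J. S i) \<noteq> {}}"

lemma finite_nerve: "finite M \<Longrightarrow> finite (nerve M S)"
  unfolding nerve_def by (rule finite_subset[of _ "Pow M"]) auto

lemma subset_of_nerve_iff:
  assumes "I \<subseteq> M"
  shows "(\<exists>J\<in>nerve M S. I \<subseteq> J) \<longleftrightarrow> I \<in> nerve M S"
  using assms unfolding nerve_def by blast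

lemma Inter_label_preimages_nonempty_iff:
  fixes e :: "'i set \<Rightarrow> real" and k :: "'n::finite"
  assumes "inj_on e N" and "I \<noteq> {}"
  shows "(\<Inter>i\<in>I. {x::real ^ 'n. x $ k \<in> e ` {J \<in> N. i \<in> J}}) \<noteq> {} \<longleftrightarrow> (\<exists>J\<in>N. I \<subseteq> J)"
proof
  assume "(\<Inter>i\<in>I. {x::real ^ 'n. x $ k \<in> e ` {J \<in> N. i \<in> J}}) \<noteq> {}"
  then obtain x :: "real ^ 'n" where x: "\<And>i. i \<in> I \<Longrightarrow> x $ k \<in> e ` {J \<in> N. i \<in> J}"
    by blast
  obtain i0 where "i0 \<in> I"
    using assms(2) by blast
  then obtain J0 where J0: "J0 \<in> N" "x $ k = e J0"
    using x by blast
  have "i \<in> J0" if "i \<in> I" for i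
  proof -
    obtain J where "J \<in> N" "i \<in> J" "x $ k = e J"
      using x[OF \<open>i \<in> I\<close>] by blast
    with J0 assms(1) show ?thesis
      by (metis inj_onD)
  qed
  then show "\<exists>J\<in>N. I \<subseteq> J"
    using J0 by blast
next
  assume "\<exists>J\<in>N. I \<subseteq> J"
  then obtain J where "J \<in> N" "I \<subseteq> J"
    by blast
  then have "(\<chi> _. e J) \<in> (\<Inter>i\<in>I. {x::real ^ 'n. x $ k \<in> e ` {J \<in> N. i \<in> J}})"
    by auto
  then show "(\<Inter>i\<in>I. {x::real ^ 'n. x $ k \<in> e ` {J \<in> N. i \<in> J}}) \<noteq> {}"
    by blast
qed

theorem proposition1p7:
  fixes X :: "'a set" and S :: "nat \<Rightarrow> 'a set" and m :: nat
  assumes "\<And>i. i \<in> {1..m} \<Longrightarrow> S i \<subseteq> X"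
  shows "\<exists>C :: nat \<Rightarrow> (real ^ 2) set.
           (\<forall>i \<in> {1..m}. C i \<in> semialg_B 2) \<and>
           (\<forall>I. I \<subseteq> {1..m} \<and> I \<noteq> {} \<longrightarrow>
              ((\<Inter>i\<in>I. S i) \<noteq> {} \<longleftrightarrow> (\<Inter>i\<in>I. C i) \<noteq> {}))"
proof -
  define N where "N = nerve {1..m} S"
  have "finite N"
    unfolding N_def by (simp add: finite_nerve)
  then obtain f :: "nat set \<Rightarrow> nat" where "inj_on f N"
    using finite_imp_inj_to_nat_seg by blast
  then have inj: "inj_on (real \<circ> f) N"
    by (simp add: comp_inj_on)
  define C where "C i = {x::real ^ 2. x $ 1 \<in> (real \<circ> f) ` {J \<in> N. i \<in> J}}" for i
  have C_B: "C i \<in> semialg_B 2" for i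
    unfolding C_def using \<open>finite N\<close> by (intro semialg_B_coordinate_in_finite) auto
  have C_meet_iff: "(\<Inter>i\<in>I. S i) \<noteq> {} \<longleftrightarrow> (\<Inter>i\<in>I. C i) \<noteq> {}" if "I \<subseteq> {1..m}" "I \<noteq> {}" for I
  proof -
    have "(\<Inter>i\<in>I. S i) \<noteq> {} \<longleftrightarrow> I \<in> N"
      using that(1) by (simp add: N_def nerve_def)
    also have "\<dots> \<longleftrightarrow> (\<exists>J\<in>N. I \<subseteq> J)"
      unfolding N_def by (rule subset_of_nerve_iff[OF that(1), symmetric])
    also have "\<dots> \<longleftrightarrow> (\<Inter>i\<in>I. C i) \<noteq> {}"
      unfolding C_def by (rule Inter_label_preimages_nonempty_iff[OF inj that(2), symmetric])
    finally show ?thesis .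
  qed
  show ?thesis
    using C_B C_meet_iff by (intro exI[of _ C]) simp
qed

end
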